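(* Let $1<p<\infty$ and $\eta(y)=y/(1-y)$ for $y\in(0,1)$. (a) If $a\in SO(\mathbb{R}_+)$, then $a\circ\eta\in SO(\mathbb{I})$. (b) If $\alpha\in SOS(\mathbb{R}_+)$, then $\widetilde\alpha:=\eta^{-1}\circ\alpha\circ\eta\in SOS(\mathbb{I})$, the function $c_{\alpha,p}(y):=\big(\frac{1-\widetilde\alpha(y)}{1-y}\big)^{2/p}$, $y\in\mathbb{I}$, belongs to $SO(\mathbb{I})$, and \[ 0<\inf_{y\in\mathbb{I}}c_{\alpha,p}(y)\le\sup_{y\in\mathbb{I}}c_{\alpha,p}(y)<+\infty. \]
   Context: $\mathbb{R}_+=(0,\infty)$, $\mathbb{I}=(0,1)$; $\eta^{-1}(t)=t/(1+t)$. $C_b(X)$: bounded continuous complex functions on $X$. $\operatorname{osc}(f,[\lambda r,r]):=\sup\{|f(t)-f(\tau)|:t,\tau\in[\lambda r,r]\}$. $SO(\mathbb{R}_+)$: $f\in C_b(\mathbb{R}_+)$ with $\lim_{r\to s}\operatorname{osc}(f,[\lambda r,r])=0$ for $s\in\{0,\infty\}$ and each (equivalently some) $\lambda\in(0,1)$. $SO(\mathbb{I})$: $\varphi\in C_b(\mathbb{I})$ such that $\lim_{r\to0}\operatorname{osc}(\varphi,[\lambda r,r])=0$ and $\lim_{r\to0}\operatorname{osc}(\varphi(1-\cdot),[\lambda r,r])=0$ for each (equivalently some) $\lambda\in(0,1)$. $SOS(\mathbb{R}_+)$: orientation-preserving diffeomorphisms $\alpha$ of $\mathbb{R}_+$ onto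 itself with no fixed points in $\mathbb{R}_+$, $\log\alpha'\in C_b(\mathbb{R}_+)$, $\alpha'\in SO(\mathbb{R}_+)$. $SOS(\mathbb{I})$: orientation-preserving diffeomorphisms of $\mathbb{I}$ onto itself with no fixed points in $\mathbb{I}$ (only fixed points $0,1$), with $\log\alpha'\in C_b(\mathbb{I})$ and $\alpha'\in SO(\mathbb{I})$. *)

theory Defs
  imports "HOL-Analysis.Analysis"
begin

definition osc :: "(real \<Rightarrow> complex) \<Rightarrow> real set \<Rightarrow> real" where
  "osc f S = Sup {norm (f t - f \<tau>) | t \<tau>. t \<in> S \<and> \<tau> \<in> S}"

definition Cb :: "real set \<Rightarrow> (real \<Rightarrow> complex) \<Rightarrow> bool" where
  "Cb X f \<longleftrightarrow> continuous_on X f \<and> bounded (f ` X)"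

definition Rp :: "real set" where "Rp = {0<..}"
definition II :: "real set" where "II = {0<..<1}"

definition SO_Rp :: "(real \<Rightarrow> complex) \<Rightarrow> bool" where
  "SO_Rp f \<longleftrightarrow> Cb Rp f \<and>
     (\<forall>l\<in>{0<..<1::real}.
        ((\<lambda>r. osc f {l*r..r}) \<longlongrightarrow> 0) (at_right 0) \<and>
        ((\<lambda>r. osc f {l*r..r}) \<longlongrightarrow> 0) at_top)"

definition SO_I :: "(real \<Rightarrow> complex) \<Rightarrow> bool" where
  "SO_I \<phi> \<longleftrightarrow> Cb II \<phi> \<and>
     (\<forall>l\<in>{0<..<1::real}.
        ((\<lambda>r. osc \<phi> {l*r..r}) \<longlongrightarrow> 0) (at_right 0) \<and>
        ((\<lambda>r. osc (\<lambda>t. \<phi> (1 - t)) {l*r..r}) \<longlongrightarrow> 0) (at_right 0))"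

definition op_diffeo_on :: "real set \<Rightarrow> (real \<Rightarrow> real) \<Rightarrow> bool" where
  "op_diffeo_on S \<alpha> \<longleftrightarrow> bij_betw \<alpha> S S \<and> strict_mono_on S \<alpha> \<and>
     (\<forall>x\<in>S. \<alpha> differentiable (at x)) \<and> continuous_on S (deriv \<alpha>) \<and>
     (\<forall>y\<in>S. inv_into S \<alpha> differentiable (at y)) \<and>
     continuous_on S (deriv (inv_into S \<alpha>))"

definition SOS_Rp :: "(real \<Rightarrow> real) \<Rightarrow> bool" where
  "SOS_Rp \<alpha> \<longleftrightarrow> op_diffeo_on Rp \<alpha> \<and> (\<forall>x\<in>Rp. \<alpha> x \<noteq> x) \<and>
     Cb Rp (\<lambda>x. complex_of_real (ln (deriv \<alpha> x))) \<and>
     SO_Rp (\<lambda>x. complex_of_real (deriv \<alpha> x))"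

definition SOS_I :: "(real \<Rightarrow> real) \<Rightarrow> bool" where
  "SOS_I \<alpha> \<longleftrightarrow> op_diffeo_on II \<alpha> \<and> (\<forall>x\<in>II. \<alpha> x \<noteq> x) \<and>
     Cb II (\<lambda>x. complex_of_real (ln (deriv \<alpha> x))) \<and>
     SO_I (\<lambda>x. complex_of_real (deriv \<alpha> x))"

definition eta :: "real \<Rightarrow> real" where "eta y = y / (1 - y)"
definition eta_inv :: "real \<Rightarrow> real" where "eta_inv t = t / (1 + t)"

end

theory Submission
  imports Defs
begin

text \<open>
  Part (a): near \<open>0\<close> the map \<open>eta\<close> is comparable to the identity, and near \<open>1\<close> one has
  \<open>eta (1 - u) = 1/u - 1\<close>; in both cases \<open>eta\<close> maps an interval \<open>[l r, r]\<close> into an interval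
  \<open>[(l/2) s, s]\<close> with \<open>s \<rightarrow> 0\<close> resp. \<open>s \<rightarrow> \<infinity>\<close>, so slow oscillation is transported.

  Part (b): with \<open>t = eta y\<close> one has \<open>1 - \<alpha>t y = 1/(1 + \<alpha> t)\<close> and \<open>1 - y = 1/(1 + t)\<close>, so
  \<open>c y = q t powr (2/p)\<close> and \<open>\<alpha>t' y = \<alpha>' t * (q t)\<^sup>2\<close> with \<open>q t = (1 + t)/(1 + \<alpha> t)\<close>
  (\<open>shifted_ratio \<alpha> t\<close> below).
  The bound on \<open>ln \<alpha>'\<close> pinches \<open>\<alpha>'\<close>, hence \<open>\<alpha> t / t\<close> and \<open>q\<close>, between \<open>1/K\<close> and \<open>K\<close>.
  At \<open>0\<close> the function \<open>q\<close> tends to \<open>1\<close>; at \<open>\<infinity>\<close> it is asymptotic to \<open>t / \<alpha> t\<close>, and by the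
  mean value theorem \<open>\<alpha> t / t\<close> is asymptotic to \<open>\<alpha>' t\<close>, which oscillates slowly. Hence
  \<open>q\<close> is slowly oscillating on \<open>(0, \<infinity>)\<close>, and so are \<open>q powr (2/p)\<close> and \<open>\<alpha>' q\<^sup>2\<close>; part (a) carries them over to \<open>(0, 1)\<close>.
\<close>

text \<open>An \<open>\<epsilon>\<close>-form of \<open>osc f {l r..r} \<rightarrow> 0\<close>; it avoids the supremum in \<open>osc\<close>, which is
  junk for unbounded \<open>f\<close>.\<close>
definition osc_vanishes :: "(real \<Rightarrow> complex) \<Rightarrow> real \<Rightarrow> real filter \<Rightarrow> bool" where
  "osc_vanishes f l F \<longleftrightarrow>
     (\<forall>e>0. \<forall>\<^sub>F r in F. \<forall>t\<in>{l*r..r}. \<forall>\<tau>\<in>{l*r..r}. norm (f t - f \<tau>) \<le> e)"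

lemma osc_upper:
  assumes "bounded (f ` S)" "t \<in> S" "\<tau> \<in> S"
  shows "norm (f t - f \<tau>) \<le> osc f S"
proof -
  obtain B where B: "\<And>x. x \<in> S \<Longrightarrow> norm (f x) \<le> B"
    using assms(1) by (auto simp: bounded_iff)
  have bdd: "bdd_above {norm (f t - f \<tau>) | t \<tau>. t \<in> S \<and> \<tau> \<in> S}"
  proof (rule bdd_aboveI[where M = "2 * B"], clarify)
    fix t \<tau> assume "t \<in> S" "\<tau> \<in> S"
    then have "norm (f t) \<le> B" "norm (f \<tau>) \<le> B" using B by auto
    then show "norm (f t - f \<tau>) \<le> 2 * B" using norm_triangle_ineq4[of "f t" "f \<tau>"] by linarith
  qed
  show ?thesis
    unfolding osc_def by (rule cSup_upper[OF _ bdd]) (use assms in auto)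
qed

lemma osc_least:
  assumes "S \<noteq> {}" "\<And>t \<tau>. t \<in> S \<Longrightarrow> \<tau> \<in> S \<Longrightarrow> norm (f t - f \<tau>) \<le> e"
  shows "osc f S \<le> e"
  unfolding osc_def by (rule cSup_least) (use assms in fastforce)+

lemma tendsto_osc_iff_osc_vanishes:
  assumes bounded: "bounded (f ` S)"
    and inside: "\<forall>\<^sub>F r in F. l*r \<le> r \<and> {l*r..r} \<subseteq> S"
  shows "((\<lambda>r. osc f {l*r..r}) \<longlongrightarrow> 0) F \<longleftrightarrow> osc_vanishes f l F"
proof
  assume lim: "((\<lambda>r. osc f {l*r..r}) \<longlongrightarrow> 0) F"
  show "osc_vanishes f l F"
    unfolding osc_vanishes_def
  proof (intro allI impI)
    fix e :: real assume "e > 0"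
    from order_tendstoD(2)[OF lim this] inside
    show "\<forall>\<^sub>F r in F. \<forall>t\<in>{l*r..r}. \<forall>\<tau>\<in>{l*r..r}. norm (f t - f \<tau>) \<le> e"
    proof eventually_elim
      case (elim r)
      then show ?case
        using osc_upper[OF bounded_subset[OF bounded image_mono]] by (meson less_le order_trans)
    qed
  qed
next
  assume small: "osc_vanishes f l F"
  show "((\<lambda>r. osc f {l*r..r}) \<longlongrightarrow> 0) F"
  proof (rule tendstoI)
    fix e :: real assume "e > 0"
    then have "\<forall>\<^sub>F r in F. \<forall>t\<in>{l*r..r}. \<forall>\<tau>\<in>{l*r..r}. norm (f t - f \<tau>) \<le> e/2"
      using small unfolding osc_vanishes_def by (meson half_gt_zero)
    with inside show "\<forall>\<^sub>F r in F. dist (osc f {l*r..r}) 0 < e"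
    proof eventually_elim
      case (elim r)
      then have "{l*r..r} \<noteq> {}" by auto
      moreover have "bounded (f ` {l*r..r})"
        using elim bounded_subset[OF bounded image_mono] by blast
      ultimately have "0 \<le> osc f {l*r..r}" "osc f {l*r..r} \<le> e/2"
        using osc_upper[of f "{l*r..r}" r r] osc_least[of "{l*r..r}" f "e/2"] elim by auto
      then show ?case using \<open>e > 0\<close> by simp
    qed
  qed
qed

lemma eventually_interval_in_Rp_at_right:
  "l \<in> {0<..<1} \<Longrightarrow> \<forall>\<^sub>F r in at_right 0. l*r \<le> r \<and> {l*r..r} \<subseteq> Rp"
  unfolding eventually_at_right_field Rp_def
  by (rule exI[of _ 1]) (auto simp: mult_le_cancel_right1 intro: less_le_trans[OF mult_pos_pos])

lemma eventually_interval_in_Rp_at_top: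
  assumes "l \<in> {0<..<1}"
  shows "\<forall>\<^sub>F r in at_top. l*r \<le> r \<and> {l*r..r} \<subseteq> Rp"
proof -
  have "l*r \<le> r \<and> {l*r..r} \<subseteq> Rp" if "1 \<le> r" for r :: real
  proof -
    have "0 < l*r" "l*r \<le> r" using assms that by (auto simp: mult_le_cancel_right1)
    then show ?thesis by (auto simp: Rp_def)
  qed
  then show ?thesis unfolding eventually_at_top_linorder by blast
qed

lemma eventually_interval_in_II_at_right:
  "l \<in> {0<..<1} \<Longrightarrow> \<forall>\<^sub>F r in at_right 0. l*r \<le> r \<and> {l*r..r} \<subseteq> II"
  unfolding eventually_at_right_field II_def
  by (rule exI[of _ 1]) (auto simp: mult_le_cancel_right1 intro: less_le_trans[OF mult_pos_pos])

lemma SO_Rp_iff: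
  "SO_Rp f \<longleftrightarrow> Cb Rp f \<and>
     (\<forall>l\<in>{0<..<1}. osc_vanishes f l (at_right 0) \<and> osc_vanishes f l at_top)"
  unfolding SO_Rp_def Cb_def
  using tendsto_osc_iff_osc_vanishes[OF _ eventually_interval_in_Rp_at_right]
    tendsto_osc_iff_osc_vanishes[OF _ eventually_interval_in_Rp_at_top]
  by blast

lemma SO_I_iff:
  "SO_I f \<longleftrightarrow> Cb II f \<and>
     (\<forall>l\<in>{0<..<1}. osc_vanishes f l (at_right 0) \<and> osc_vanishes (\<lambda>t. f (1 - t)) l (at_right 0))"
proof -
  have "bounded ((\<lambda>t. f (1 - t)) ` II)" if "bounded (f ` II)"
    by (rule bounded_subset[OF that]) (auto simp: II_def)
  then show ?thesis
    unfolding SO_I_def Cb_def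
    using tendsto_osc_iff_osc_vanishes[OF _ eventually_interval_in_II_at_right]
    by blast
qed

lemma norm_complex_of_real_diff [simp]:
  "norm (complex_of_real a - complex_of_real b) = \<bar>a - b\<bar>"
  by (metis norm_of_real of_real_diff)

lemma osc_vanishes_uniform_approx:
  assumes g: "osc_vanishes g l F"
    and close: "\<And>e. e > 0 \<Longrightarrow> \<forall>\<^sub>F r in F. \<forall>t\<in>{l*r..r}. norm (f t - g t) \<le> e"
  shows "osc_vanishes f l F"
  unfolding osc_vanishes_def
proof (intro allI impI)
  fix e :: real assume "e > 0"
  then have "e/3 > 0" by simp
  have "\<forall>\<^sub>F r in F. \<forall>t\<in>{l*r..r}. \<forall>\<tau>\<in>{l*r..r}. norm (g t - g \<tau>) \<le> e/3"
    using g \<open>e/3 > 0\<close> unfolding osc_vanishes_def by blast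
  with close[OF \<open>e/3 > 0\<close>]
  show "\<forall>\<^sub>F r in F. \<forall>t\<in>{l*r..r}. \<forall>\<tau>\<in>{l*r..r}. norm (f t - f \<tau>) \<le> e"
  proof eventually_elim
    case (elim r)
    show ?case
    proof (intro ballI)
      fix t \<tau> assume "t \<in> {l*r..r}" "\<tau> \<in> {l*r..r}"
      with elim have "norm (f t - g t) \<le> e/3" "norm (g t - g \<tau>) \<le> e/3" "norm (f \<tau> - g \<tau>) \<le> e/3"
        by auto
      moreover have "norm (f t - f \<tau>) = norm (((f t - g t) + (g t - g \<tau>)) - (f \<tau> - g \<tau>))"
        by (rule arg_cong[where f = norm]) simp
      then have "norm (f t - f \<tau>) \<le> norm (f t - g t) + norm (g t - g \<tau>) + norm (f \<tau> - g \<tau>)"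
        using norm_triangle_ineq4[of "(f t - g t) + (g t - g \<tau>)" "f \<tau> - g \<tau>"]
          norm_triangle_ineq[of "f t - g t" "g t - g \<tau>"] by linarith
      ultimately show "norm (f t - f \<tau>) \<le> e" by linarith
    qed
  qed
qed

lemma osc_vanishes_const: "osc_vanishes (\<lambda>_. c) l F"
  unfolding osc_vanishes_def by auto

lemma osc_vanishes_tendsto_at_top:
  assumes g: "osc_vanishes g l at_top" and "0 < l"
    and lim: "((\<lambda>t. f t - g t) \<longlongrightarrow> 0) at_top"
  shows "osc_vanishes f l at_top"
proof (rule osc_vanishes_uniform_approx[OF g])
  fix e :: real assume "e > 0"
  then obtain N where N: "\<And>t. t \<ge> N \<Longrightarrow> norm (f t - g t) < e"
    using lim unfolding tendsto_iff eventually_at_top_linorder by auto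
  have "norm (f t - g t) \<le> e" if "N/l \<le> r" "t \<in> {l*r..r}" for r t
    using N[of t] that \<open>0 < l\<close> by (simp add: field_simps)
  then show "\<forall>\<^sub>F r in at_top. \<forall>t\<in>{l*r..r}. norm (f t - g t) \<le> e"
    unfolding eventually_at_top_linorder by blast
qed

lemma osc_vanishes_tendsto_at_right:
  assumes g: "osc_vanishes g l (at_right 0)" and "0 < l"
    and lim: "((\<lambda>t. f t - g t) \<longlongrightarrow> 0) (at_right 0)"
  shows "osc_vanishes f l (at_right 0)"
proof (rule osc_vanishes_uniform_approx[OF g])
  fix e :: real assume "e > 0"
  then obtain b where "b > 0" and b: "\<And>t. 0 < t \<Longrightarrow> t < b \<Longrightarrow> norm (f t - g t) < e"
    using lim unfolding tendsto_iff eventually_at_right_field by auto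
  have "norm (f t - g t) \<le> e" if "0 < r" "r < b" "t \<in> {l*r..r}" for r t
  proof -
    have "0 < l*r" using that \<open>0 < l\<close> by simp
    then show ?thesis using b[of t] that by auto
  qed
  then show "\<forall>\<^sub>F r in at_right 0. \<forall>t\<in>{l*r..r}. norm (f t - g t) \<le> e"
    unfolding eventually_at_right_field using \<open>b > 0\<close> by blast
qed

lemma osc_vanishes_compose:
  fixes u h :: "real \<Rightarrow> real"
  assumes u: "osc_vanishes (\<lambda>t. complex_of_real (u t)) l F"
    and h: "continuous_on K h" "compact K"
    and range: "\<forall>\<^sub>F r in F. \<forall>t\<in>{l*r..r}. u t \<in> K"
  shows "osc_vanishes (\<lambda>t. complex_of_real (h (u t))) l F"
  unfolding osc_vanishes_def
proof (intro allI impI)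
  fix e :: real assume "e > 0"
  obtain d where "d > 0"
    and d: "\<And>x x'. x \<in> K \<Longrightarrow> x' \<in> K \<Longrightarrow> dist x' x < d \<Longrightarrow> dist (h x') (h x) < e"
    using compact_uniformly_continuous[OF h] \<open>e > 0\<close> unfolding uniformly_continuous_on_def by metis
  have "d/2 > 0" using \<open>d > 0\<close> by simp
  with u have "\<forall>\<^sub>F r in F. \<forall>t\<in>{l*r..r}. \<forall>\<tau>\<in>{l*r..r}. \<bar>u t - u \<tau>\<bar> \<le> d/2"
    unfolding osc_vanishes_def norm_complex_of_real_diff by blast
  with range show "\<forall>\<^sub>F r in F. \<forall>t\<in>{l*r..r}. \<forall>\<tau>\<in>{l*r..r}.
      norm (complex_of_real (h (u t)) - complex_of_real (h (u \<tau>))) \<le> e"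
  proof eventually_elim
    case (elim r)
    show ?case
    proof (intro ballI)
      fix t \<tau> assume t: "t \<in> {l*r..r}" "\<tau> \<in> {l*r..r}"
      with elim have "\<bar>u t - u \<tau>\<bar> \<le> d/2" "u t \<in> K" "u \<tau> \<in> K" by auto
      with \<open>d > 0\<close> have "dist (h (u t)) (h (u \<tau>)) < e"
        by (intro d) (auto simp: dist_real_def)
      then show "norm (complex_of_real (h (u t)) - complex_of_real (h (u \<tau>))) \<le> e"
        by (simp add: dist_real_def)
    qed
  qed
qed

lemma osc_vanishes_mult:
  assumes f: "osc_vanishes f l F" and g: "osc_vanishes g l F" and "B > 0"
    and bounded: "\<forall>\<^sub>F r in F. \<forall>t\<in>{l*r..r}. norm (f t) \<le> B \<and> norm (g t) \<le> B"
  shows "osc_vanishes (\<lambda>t. f t * g t) l F"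
  unfolding osc_vanishes_def
proof (intro allI impI)
  fix e :: real assume "e > 0"
  define e' where "e' = e / (2*B)"
  have "e' > 0" using \<open>e > 0\<close> \<open>B > 0\<close> by (simp add: e'_def)
  with f g have
    "\<forall>\<^sub>F r in F. \<forall>t\<in>{l*r..r}. \<forall>\<tau>\<in>{l*r..r}. norm (f t - f \<tau>) \<le> e'"
    "\<forall>\<^sub>F r in F. \<forall>t\<in>{l*r..r}. \<forall>\<tau>\<in>{l*r..r}. norm (g t - g \<tau>) \<le> e'"
    unfolding osc_vanishes_def by blast+
  with bounded
  show "\<forall>\<^sub>F r in F. \<forall>t\<in>{l*r..r}. \<forall>\<tau>\<in>{l*r..r}. norm (f t * g t - f \<tau> * g \<tau>) \<le> e"
  proof eventually_elim
    case (elim r)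
    show ?case
    proof (intro ballI)
      fix t \<tau> assume t: "t \<in> {l*r..r}" "\<tau> \<in> {l*r..r}"
      have "norm (f t * (g t - g \<tau>)) \<le> B * e'" "norm ((f t - f \<tau>) * g \<tau>) \<le> e' * B"
        unfolding norm_mult using elim t \<open>B > 0\<close> \<open>e' > 0\<close> by (intro mult_mono; simp)+
      moreover have "f t * g t - f \<tau> * g \<tau> = f t * (g t - g \<tau>) + (f t - f \<tau>) * g \<tau>"
        by (simp add: algebra_simps)
      moreover have "B * e' + e' * B = e" using \<open>B > 0\<close> by (simp add: e'_def field_simps)
      ultimately show "norm (f t * g t - f \<tau> * g \<tau>) \<le> e"
        by (metis norm_triangle_le add_mono)
    qed
  qed
qed

lemma Rp_iff [simp]: "x \<in> Rp \<longleftrightarrow> 0 < x"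
  by (simp add: Rp_def)

lemma II_iff [simp]: "x \<in> II \<longleftrightarrow> 0 < x \<and> x < 1"
  by (simp add: II_def)

lemma eta_pos: "0 < y \<Longrightarrow> y < 1 \<Longrightarrow> 0 < eta y"
  unfolding eta_def by simp

lemma eta_mono: "0 \<le> x \<Longrightarrow> x \<le> y \<Longrightarrow> y < 1 \<Longrightarrow> eta x \<le> eta y"
  unfolding eta_def by (rule frac_le) auto

lemma eta_strict_mono: "0 \<le> x \<Longrightarrow> x < y \<Longrightarrow> y < 1 \<Longrightarrow> eta x < eta y"
  unfolding eta_def by (rule frac_less) auto

lemma eta_ge: "0 \<le> y \<Longrightarrow> y < 1 \<Longrightarrow> y \<le> eta y"
  unfolding eta_def using frac_le[of y y "1 - y" 1] by simp

lemma eta_le_double: "0 \<le> y \<Longrightarrow> y \<le> 1/2 \<Longrightarrow> eta y \<le> 2 * y"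
  unfolding eta_def using frac_le[of y y "1/2" "1 - y"] by simp

lemma eta_one_minus: "u \<noteq> 0 \<Longrightarrow> eta (1 - u) = 1/u - 1"
  unfolding eta_def by (simp add: diff_divide_distrib)

lemma continuous_on_eta: "continuous_on II eta"
  unfolding eta_def by (intro continuous_intros) auto

lemma eta_inv_eta: "y < 1 \<Longrightarrow> eta_inv (eta y) = y"
  unfolding eta_def eta_inv_def by (simp add: field_simps)

lemma eta_eta_inv: "0 < t \<Longrightarrow> eta (eta_inv t) = t"
  unfolding eta_def eta_inv_def by (simp add: field_simps)

lemma eta_inv_bounds: "0 < t \<Longrightarrow> 0 < eta_inv t \<and> eta_inv t < 1"
  unfolding eta_inv_def by simp

lemma bij_betw_eta: "bij_betw eta II Rp"
  by (rule bij_betw_byWitness[where f' = eta_inv])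
    (auto simp: eta_inv_eta eta_eta_inv eta_pos eta_inv_bounds)

lemma bij_betw_eta_inv: "bij_betw eta_inv Rp II"
  by (rule bij_betw_byWitness[where f' = eta])
    (auto simp: eta_inv_eta eta_eta_inv eta_pos eta_inv_bounds)

lemma eta_inv_strict_mono: "0 < s \<Longrightarrow> s < t \<Longrightarrow> eta_inv s < eta_inv t"
  unfolding eta_inv_def by (simp add: frac_less2 divide_less_cancel field_simps)

lemma Cb_comp_eta:
  assumes "Cb Rp a" shows "Cb II (a \<circ> eta)"
proof -
  have sub: "eta ` II \<subseteq> Rp" using eta_pos by auto
  then have "continuous_on II (a \<circ> eta)"
    using assms continuous_on_compose[OF continuous_on_eta] continuous_on_subset
    unfolding Cb_def by blast
  moreover have "bounded ((a \<circ> eta) ` II)"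
    using assms bounded_subset[OF _ image_mono[OF sub]] unfolding Cb_def image_comp by blast
  ultimately show ?thesis unfolding Cb_def by blast
qed

text \<open>Near \<open>0\<close>, \<open>y \<le> eta y \<le> 2y\<close>, so \<open>eta\<close> maps \<open>[l r, r]\<close> into \<open>[(l/2) s, s]\<close> with \<open>s = eta r\<close>.\<close>
lemma osc_vanishes_comp_eta_at_right:
  assumes l: "l \<in> {0<..<1}" and a: "osc_vanishes a (l/2) (at_right 0)"
  shows "osc_vanishes (a \<circ> eta) l (at_right 0)"
  unfolding osc_vanishes_def
proof (intro allI impI)
  fix e :: real assume "e > 0"
  then obtain b where "b > 0" and b: "\<And>s. 0 < s \<Longrightarrow> s < b \<Longrightarrow>
      \<forall>t\<in>{l/2 * s..s}. \<forall>\<tau>\<in>{l/2 * s..s}. norm (a t - a \<tau>) \<le> e"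
    using a unfolding osc_vanishes_def eventually_at_right_field by blast
  have "\<forall>t\<in>{l*r..r}. \<forall>\<tau>\<in>{l*r..r}. norm (a (eta t) - a (eta \<tau>)) \<le> e"
    if r: "0 < r" "r < min (1/2) (b/2)" for r
  proof -
    have "0 < eta r" "eta r < b" using r eta_pos eta_le_double[of r] by auto
    moreover have "eta x \<in> {l/2 * eta r..eta r}" if x: "x \<in> {l*r..r}" for x
    proof -
      have "0 \<le> x" using x l r by (auto intro: order_trans[rotated])
      with x r have "eta x \<le> eta r" "x \<le> eta x" using eta_mono eta_ge by auto
      moreover have "l/2 * eta r \<le> l*r" using eta_le_double[of r] r l by auto
      ultimately show ?thesis using x by auto
    qed
    ultimately show ?thesis using b by blast
  qed
  then show "\<forall>\<^sub>F r in at_right 0. \<forall>t\<in>{l*r..r}. \<forall>\<tau>\<in>{l*r..r}. norm ((a \<circ> eta) t - (a \<circ> eta) \<tau>) \<le> e"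
    unfolding eventually_at_right_field o_def using \<open>b > 0\<close>
    by (intro exI[of _ "min (1/2) (b/2)"]) auto
qed

text \<open>Near \<open>1\<close>, \<open>eta (1 - x) = 1/x - 1\<close>, so \<open>[l r, r]\<close> is mapped into \<open>[(l/2) s, s]\<close>
  with \<open>s = 1/(l r) - 1\<close>, which tends to infinity.\<close>
lemma osc_vanishes_comp_eta_at_left:
  assumes l: "l \<in> {0<..<1}" and a: "osc_vanishes a (l/2) at_top"
  shows "osc_vanishes (\<lambda>u. (a \<circ> eta) (1 - u)) l (at_right 0)"
  unfolding osc_vanishes_def
proof (intro allI impI)
  fix e :: real assume "e > 0"
  then obtain N where N: "\<And>s. s \<ge> N \<Longrightarrow>
      \<forall>t\<in>{l/2 * s..s}. \<forall>\<tau>\<in>{l/2 * s..s}. norm (a t - a \<tau>) \<le> e"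
    using a unfolding osc_vanishes_def eventually_at_top_linorder by blast
  define R where "R = min (1/2) (1 / (2 * l * (\<bar>N\<bar> + 1)))"
  have "R > 0" using l by (simp add: R_def)
  have "\<forall>t\<in>{l*r..r}. \<forall>\<tau>\<in>{l*r..r}. norm (a (eta (1 - t)) - a (eta (1 - \<tau>))) \<le> e"
    if r: "0 < r" "r < R" for r
  proof -
    define s where "s = 1/(l*r) - 1"
    have "l*r < r" "r < 1/2" using l r by (simp_all add: R_def)
    then have lr: "0 < l*r" "l*r < 1/2" using l r by (simp, linarith)
    have "2 * (l*r) * (\<bar>N\<bar> + 1) < 1"
      using r l by (simp add: R_def pos_less_divide_eq mult.commute mult.left_commute)
    then have "\<bar>N\<bar> + 1 < 1 / (2 * (l*r))"
      using lr by (simp add: pos_less_divide_eq mult.commute)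
    also have "\<dots> \<le> s + 1 - 1 / (2 * (l*r))"
      using lr by (simp add: s_def field_simps)
    also have "\<dots> \<le> s"
      using lr by (simp add: field_simps)
    finally have "N \<le> s" by linarith
    moreover have "eta (1 - x) \<in> {l/2 * s..s}" if x: "x \<in> {l*r..r}" for x
    proof -
      have "0 < x" using x lr by auto
      have "1/x \<le> 1/(l*r)" using x lr by (intro divide_left_mono) auto
      moreover have "l/2 * s \<le> 1/x - 1"
      proof -
        have "l/2 * s = 1/(2*r) - l/2" using lr l by (simp add: s_def field_simps)
        also have "\<dots> \<le> 1/r - 1"
        proof -
          have "1 < 1/(2*r)" using \<open>r < 1/2\<close> r by (simp add: field_simps)
          moreover have "1/r = 2 * (1/(2*r))" "0 < l" using l by simp_all
          ultimately show ?thesis by linarith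
        qed
        also have "\<dots> \<le> 1/x - 1" using x \<open>0 < x\<close> by (simp add: divide_left_mono)
        finally show ?thesis .
      qed
      ultimately show ?thesis using \<open>0 < x\<close> by (simp add: eta_one_minus s_def)
    qed
    ultimately show ?thesis using N by blast
  qed
  then show "\<forall>\<^sub>F r in at_right 0. \<forall>t\<in>{l*r..r}. \<forall>\<tau>\<in>{l*r..r}.
      norm ((a \<circ> eta) (1 - t) - (a \<circ> eta) (1 - \<tau>)) \<le> e"
    unfolding eventually_at_right_field o_def using \<open>R > 0\<close> by blast
qed

lemma SO_I_comp_eta:
  assumes "SO_Rp a" shows "SO_I (a \<circ> eta)"
  unfolding SO_I_iff
proof (intro conjI ballI)
  show "Cb II (a \<circ> eta)" using assms Cb_comp_eta unfolding SO_Rp_iff by blast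
  fix l :: real assume l: "l \<in> {0<..<1}"
  then have "l/2 \<in> {0<..<1}" by auto
  with assms have "osc_vanishes a (l/2) (at_right 0)" "osc_vanishes a (l/2) at_top"
    unfolding SO_Rp_iff by blast+
  then show "osc_vanishes (a \<circ> eta) l (at_right 0)"
    "osc_vanishes (\<lambda>u. (a \<circ> eta) (1 - u)) l (at_right 0)"
    using osc_vanishes_comp_eta_at_right[OF l] osc_vanishes_comp_eta_at_left[OF l] by blast+
qed

lemma SO_I_cong:
  assumes "SO_I f" and eq: "\<And>y. y \<in> II \<Longrightarrow> f y = g y"
  shows "SO_I g"
proof -
  have "Cb II g"
    using assms unfolding SO_I_def Cb_def by (metis continuous_on_cong image_cong)
  moreover have "osc_vanishes g l (at_right 0) \<and> osc_vanishes (\<lambda>t. g (1 - t)) l (at_right 0)"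
    if l: "l \<in> {0<..<1}" for l
  proof -
    have f: "osc_vanishes f l (at_right 0)" "osc_vanishes (\<lambda>t. f (1 - t)) l (at_right 0)"
      using assms(1) l unfolding SO_I_iff by auto
    have "\<forall>\<^sub>F r in at_right 0. \<forall>t\<in>{l*r..r}. g t = f t \<and> g (1 - t) = f (1 - t)"
      using eventually_interval_in_II_at_right[OF l] by eventually_elim (auto simp: eq)
    then have close: "\<forall>\<^sub>F r in at_right 0. \<forall>t\<in>{l*r..r}. norm (g t - f t) \<le> e"
      "\<forall>\<^sub>F r in at_right 0. \<forall>t\<in>{l*r..r}. norm (g (1 - t) - f (1 - t)) \<le> e"
      if "e > 0" for e
      using that by (auto elim: eventually_mono)
    show ?thesis
      using osc_vanishes_uniform_approx[OF f(1) close(1)]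
        osc_vanishes_uniform_approx[OF f(2) close(2)] by simp
  qed
  ultimately show ?thesis unfolding SO_I_iff by blast
qed

lemma SO_Rp_compose:
  fixes u h :: "real \<Rightarrow> real"
  assumes u: "SO_Rp (\<lambda>t. complex_of_real (u t))"
    and h: "continuous_on {a..b} h" and range: "\<And>t. 0 < t \<Longrightarrow> u t \<in> {a..b}"
  shows "SO_Rp (\<lambda>t. complex_of_real (h (u t)))"
  unfolding SO_Rp_iff
proof (intro conjI ballI)
  have "continuous_on Rp u" using u unfolding SO_Rp_def Cb_def by simp
  then have "continuous_on Rp (\<lambda>t. h (u t))"
    by (rule continuous_on_compose2[OF h]) (use range in auto)
  moreover obtain B where "\<And>y. y \<in> h ` {a..b} \<Longrightarrow> norm y \<le> B"
    using compact_imp_bounded[OF compact_continuous_image[OF h]] by (auto simp: bounded_iff)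
  then have "bounded ((\<lambda>t. complex_of_real (h (u t))) ` Rp)"
    unfolding bounded_iff using range by (intro exI[of _ B]) auto
  ultimately show "Cb Rp (\<lambda>t. complex_of_real (h (u t)))" unfolding Cb_def by simp
  fix l :: real assume l: "l \<in> {0<..<1}"
  have "\<forall>\<^sub>F r in at_right 0. \<forall>t\<in>{l*r..r}. u t \<in> {a..b}"
    using eventually_interval_in_Rp_at_right[OF l] by eventually_elim (use range in auto)
  moreover have "\<forall>\<^sub>F r in at_top. \<forall>t\<in>{l*r..r}. u t \<in> {a..b}"
    using eventually_interval_in_Rp_at_top[OF l] by eventually_elim (use range in auto)
  ultimately show "osc_vanishes (\<lambda>t. complex_of_real (h (u t))) l (at_right 0)"
    "osc_vanishes (\<lambda>t. complex_of_real (h (u t))) l at_top"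
    using u l osc_vanishes_compose[OF _ h compact_Icc] unfolding SO_Rp_iff by blast+
qed

lemma SO_Rp_mult:
  assumes f: "SO_Rp f" and g: "SO_Rp g" and "B > 0"
    and bounded: "\<And>t. 0 < t \<Longrightarrow> norm (f t) \<le> B \<and> norm (g t) \<le> B"
  shows "SO_Rp (\<lambda>t. f t * g t)"
  unfolding SO_Rp_iff
proof (intro conjI ballI)
  have "continuous_on Rp (\<lambda>t. f t * g t)"
    using f g unfolding SO_Rp_def Cb_def by (intro continuous_intros) auto
  moreover have "norm (f t * g t) \<le> B * B" if "0 < t" for t
    using bounded[OF that] \<open>B > 0\<close> by (auto simp: norm_mult intro!: mult_mono)
  then have "bounded ((\<lambda>t. f t * g t) ` Rp)"
    unfolding bounded_iff using Rp_iff by blast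
  ultimately show "Cb Rp (\<lambda>t. f t * g t)" unfolding Cb_def by simp
  fix l :: real assume l: "l \<in> {0<..<1}"
  have "\<forall>\<^sub>F r in at_right 0. \<forall>t\<in>{l*r..r}. norm (f t) \<le> B \<and> norm (g t) \<le> B"
    using eventually_interval_in_Rp_at_right[OF l] by eventually_elim (use bounded in auto)
  moreover have "\<forall>\<^sub>F r in at_top. \<forall>t\<in>{l*r..r}. norm (f t) \<le> B \<and> norm (g t) \<le> B"
    using eventually_interval_in_Rp_at_top[OF l] by eventually_elim (use bounded in auto)
  ultimately show "osc_vanishes (\<lambda>t. f t * g t) l (at_right 0)"
    "osc_vanishes (\<lambda>t. f t * g t) l at_top"
    using f g l osc_vanishes_mult[OF _ _ \<open>B > 0\<close>] unfolding SO_Rp_iff by blast+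
qed

lemma eta_has_real_derivative: "y \<noteq> 1 \<Longrightarrow> (eta has_real_derivative (1 + eta y)^2) (at y)"
  unfolding eta_def[abs_def]
  by (auto intro!: derivative_eq_intros simp: field_simps power2_eq_square)

lemma eta_inv_has_real_derivative: "t \<noteq> -1 \<Longrightarrow> (eta_inv has_real_derivative 1/(1 + t)^2) (at t)"
  unfolding eta_inv_def[abs_def]
  by (auto intro!: derivative_eq_intros simp: field_simps power2_eq_square)

lemma eta_conj_C1:
  assumes diff: "\<And>x. 0 < x \<Longrightarrow> f differentiable (at x)"
    and cont: "continuous_on Rp (deriv f)" and pos: "\<And>x. 0 < x \<Longrightarrow> 0 < f x"
    and g: "\<And>y. y \<in> II \<Longrightarrow> g y = eta_inv (f (eta y))"
  shows "\<And>y. y \<in> II \<Longrightarrow> g differentiable (at y)"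
    and "\<And>y. y \<in> II \<Longrightarrow> deriv g y = deriv f (eta y) * ((1 + eta y) / (1 + f (eta y)))^2"
    and "continuous_on II (deriv g)"
proof -
  have g_deriv: "(g has_real_derivative deriv f (eta y) * ((1 + eta y) / (1 + f (eta y)))^2) (at y)"
    if y: "y \<in> II" for y
  proof -
    have "0 < eta y" using y eta_pos by simp
    then have "f (eta y) \<noteq> -1" "(f has_real_derivative deriv f (eta y)) (at (eta y))"
      using pos[of "eta y"] diff[of "eta y"] DERIV_deriv_iff_real_differentiable by auto
    moreover have "y \<noteq> 1" using y by simp
    ultimately have "((\<lambda>y. eta_inv (f (eta y))) has_real_derivative
        1/(1 + f (eta y))^2 * (deriv f (eta y) * (1 + eta y)^2)) (at y)"
      by (intro DERIV_chain2[OF eta_inv_has_real_derivative DERIV_chain2[OF _ eta_has_real_derivative]])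
    then have "((\<lambda>y. eta_inv (f (eta y))) has_real_derivative
        deriv f (eta y) * ((1 + eta y) / (1 + f (eta y)))^2) (at y)"
      by (simp add: power_divide)
    moreover have "open II" by (simp add: II_def)
    ultimately show ?thesis
      using y by (rule has_field_derivative_transform_within_open) (simp add: g)
  qed
  show "g differentiable (at y)" if "y \<in> II" for y
    using g_deriv[OF that] real_differentiable_def by blast
  show deriv_eq: "deriv g y = deriv f (eta y) * ((1 + eta y) / (1 + f (eta y)))^2"
    if "y \<in> II" for y
    using g_deriv[OF that] by (rule DERIV_imp_deriv)
  have "continuous_on Rp f"
    using diff by (auto intro!: continuous_at_imp_continuous_on differentiable_imp_continuous_within)
  moreover have sub: "eta ` II \<subseteq> Rp" using eta_pos by auto
  ultimately have "continuous_on II (\<lambda>y. f (eta y))" "continuous_on II (\<lambda>y. deriv f (eta y))"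
    using continuous_on_compose2[OF _ continuous_on_eta sub] cont by blast+
  moreover have "\<forall>y\<in>II. 1 + f (eta y) \<noteq> 0"
    using pos eta_pos by (simp add: add_pos_pos less_imp_neq[symmetric])
  ultimately have "continuous_on II (\<lambda>y. deriv f (eta y) * ((1 + eta y) / (1 + f (eta y)))^2)"
    by (intro continuous_intros continuous_on_eta)
  then show "continuous_on II (deriv g)"
    by (rule continuous_on_eq) (simp add: deriv_eq)
qed

lemma op_diffeo_on_eta_conj:
  assumes "op_diffeo_on Rp \<alpha>"
  shows "op_diffeo_on II (eta_inv \<circ> \<alpha> \<circ> eta)"
proof -
  define \<beta> where "\<beta> = inv_into Rp \<alpha>"
  have bij: "bij_betw \<alpha> Rp Rp" and mono: "strict_mono_on Rp \<alpha>"
    and \<alpha>: "\<And>x. 0 < x \<Longrightarrow> \<alpha> differentiable (at x)" "continuous_on Rp (deriv \<alpha>)"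
    and \<beta>: "\<And>x. 0 < x \<Longrightarrow> \<beta> differentiable (at x)" "continuous_on Rp (deriv \<beta>)"
    using assms unfolding op_diffeo_on_def \<beta>_def by auto
  have \<alpha>_pos: "0 < \<alpha> x" and \<beta>_pos: "0 < \<beta> x" and \<alpha>_\<beta>: "\<alpha> (\<beta> x) = x" if "0 < x" for x
    using that bij_betwE[OF bij] bij_betwE[OF bij_betw_inv_into[OF bij]]
      bij_betw_inv_into_right[OF bij] unfolding \<beta>_def by auto
  have bij_conj: "bij_betw (eta_inv \<circ> \<alpha> \<circ> eta) II II"
    by (rule bij_betw_trans[OF bij_betw_eta bij_betw_trans[OF bij bij_betw_eta_inv]])
  have "strict_mono_on II (eta_inv \<circ> \<alpha> \<circ> eta)"
  proof (rule strict_mono_onI)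
    fix x y assume "x \<in> II" "y \<in> II" "x < y"
    then have "0 < eta x" "0 < eta y" "eta x < eta y" using eta_pos eta_strict_mono by auto
    then have "\<alpha> (eta x) < \<alpha> (eta y)" using strict_mono_onD[OF mono] by simp
    then show "(eta_inv \<circ> \<alpha> \<circ> eta) x < (eta_inv \<circ> \<alpha> \<circ> eta) y"
      using \<alpha>_pos \<open>0 < eta x\<close> by (simp add: eta_inv_strict_mono)
  qed
  moreover have "inv_into II (eta_inv \<circ> \<alpha> \<circ> eta) y = eta_inv (\<beta> (eta y))" if "y \<in> II" for y
  proof (rule inv_into_f_eq[OF bij_betw_imp_inj_on[OF bij_conj]])
    have "0 < eta y" using that eta_pos by simp
    then show "eta_inv (\<beta> (eta y)) \<in> II" "(eta_inv \<circ> \<alpha> \<circ> eta) (eta_inv (\<beta> (eta y))) = y"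
      using that \<beta>_pos \<alpha>_\<beta> eta_inv_bounds eta_eta_inv eta_inv_eta by auto
  qed
  ultimately show ?thesis
    unfolding op_diffeo_on_def
    using bij_conj eta_conj_C1[OF \<alpha> \<alpha>_pos] eta_conj_C1[OF \<beta> \<beta>_pos] by auto
qed

lemma SOS_Rp_D:
  assumes "SOS_Rp \<alpha>"
  shows "bij_betw \<alpha> Rp Rp" "strict_mono_on Rp \<alpha>"
    "\<And>x. 0 < x \<Longrightarrow> (\<alpha> has_real_derivative deriv \<alpha> x) (at x)"
    "continuous_on Rp (deriv \<alpha>)" "\<And>x. 0 < x \<Longrightarrow> \<alpha> x \<noteq> x"
    "bounded ((\<lambda>x. complex_of_real (ln (deriv \<alpha> x))) ` Rp)"
    "SO_Rp (\<lambda>x. complex_of_real (deriv \<alpha> x))"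
  using assms unfolding SOS_Rp_def op_diffeo_on_def Cb_def
  by (auto simp: DERIV_deriv_iff_real_differentiable)

text \<open>Since \<open>ln x = ln \<bar>x\<bar>\<close> and \<open>ln 0 = 0\<close>, the bound on \<open>ln \<alpha>'\<close> alone only gives
  \<open>\<alpha>' = 0 \<or> \<bar>\<alpha>'\<bar> \<ge> exp (-M)\<close>; continuity of \<open>\<alpha>'\<close> together with the mean value theorem
  for the increasing \<open>\<alpha>\<close> excludes values below \<open>exp (-M)\<close>.\<close>
lemma SOS_Rp_deriv_bounds:
  assumes "SOS_Rp \<alpha>"
  obtains K where "1 \<le> K" "\<And>x. 0 < x \<Longrightarrow> 1/K \<le> deriv \<alpha> x \<and> deriv \<alpha> x \<le> K"
proof -
  note \<alpha> = SOS_Rp_D[OF assms]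
  obtain M where M: "\<And>x. 0 < x \<Longrightarrow> \<bar>ln (deriv \<alpha> x)\<bar> \<le> M"
    using \<alpha>(6) unfolding bounded_iff Rp_def by auto
  then have "0 \<le> M" by (metis abs_ge_zero order_trans zero_less_one)
  have lower: "exp (-M) \<le> deriv \<alpha> x" if "0 < x" for x
  proof (rule ccontr)
    assume "\<not> exp (-M) \<le> deriv \<alpha> x"
    moreover have "isCont (deriv \<alpha>) x"
      using \<alpha>(4) \<open>0 < x\<close> continuous_on_eq_continuous_at[OF open_greaterThan, of 0 "deriv \<alpha>"]
      unfolding Rp_def by auto
    ultimately obtain d where "d > 0"
      and d: "\<And>z. dist z x < d \<Longrightarrow> dist (deriv \<alpha> z) (deriv \<alpha> x) < exp (-M) - deriv \<alpha> x"
      unfolding continuous_at_eps_delta by (metis diff_gt_0_iff_gt not_le)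
    obtain z where z: "x < z" "z < x + d/2" "\<alpha> (x + d/2) - \<alpha> x = (d/2) * deriv \<alpha> z"
      using MVT2[of x "x + d/2" \<alpha> "deriv \<alpha>"] \<alpha>(3) \<open>0 < x\<close> \<open>d > 0\<close> by auto
    have "\<alpha> x < \<alpha> (x + d/2)"
      using strict_mono_onD[OF \<alpha>(2)] \<open>0 < x\<close> \<open>d > 0\<close> by simp
    then have "0 < (d/2) * deriv \<alpha> z" using z(3) by linarith
    then have "0 < deriv \<alpha> z" using \<open>d > 0\<close> by (simp add: zero_less_mult_iff)
    moreover have "-M \<le> ln (deriv \<alpha> z)" using M[of z] z \<open>0 < x\<close> by linarith
    ultimately have "exp (-M) \<le> deriv \<alpha> z" by (simp add: ln_ge_iff)
    moreover have "dist z x < d" using z \<open>d > 0\<close> by (simp add: dist_real_def)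
    ultimately show False using d[of z] by (simp add: dist_real_def)
  qed
  have upper: "deriv \<alpha> x \<le> exp M" if "0 < x" for x
  proof -
    have "0 < deriv \<alpha> x" using lower[OF that] exp_gt_zero[of "-M"] by linarith
    moreover have "ln (deriv \<alpha> x) \<le> M" using M[OF that] by linarith
    ultimately show ?thesis by (metis exp_le_cancel_iff exp_ln)
  qed
  show ?thesis
    using that[of "exp M"] lower upper \<open>0 \<le> M\<close> by (simp add: exp_minus inverse_eq_divide)
qed

definition shifted_ratio :: "(real \<Rightarrow> real) \<Rightarrow> real \<Rightarrow> real" where
  "shifted_ratio \<alpha> t = (1 + t) / (1 + \<alpha> t)"

lemma one_minus_eta_conj_div:
  assumes "y < 1" "\<alpha> (eta y) \<noteq> -1"
  shows "(1 - (eta_inv \<circ> \<alpha> \<circ> eta) y) / (1 - y) = shifted_ratio \<alpha> (eta y)"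
  using assms unfolding shifted_ratio_def eta_def eta_inv_def
  by (simp add: field_simps)

lemma INF_SUP_of_bounded_below_by_pos:
  fixes c :: "'a \<Rightarrow> real"
  assumes "S \<noteq> {}" "0 < m" and bounds: "\<And>y. y \<in> S \<Longrightarrow> m \<le> c y \<and> c y \<le> M"
  shows "bdd_below (c ` S) \<and> bdd_above (c ` S) \<and> 0 < (INF y\<in>S. c y) \<and>
    (INF y\<in>S. c y) \<le> (SUP y\<in>S. c y)"
proof -
  have below: "bdd_below (c ` S)" by (rule bdd_belowI2[of S m]) (use bounds in blast)
  have above: "bdd_above (c ` S)" by (rule bdd_aboveI2[of S c M]) (use bounds in blast)
  moreover have "m \<le> (INF y\<in>S. c y)"
    using bounds by (intro cINF_greatest[OF \<open>S \<noteq> {}\<close>]) auto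
  moreover obtain y where "y \<in> S" using \<open>S \<noteq> {}\<close> by blast
  then have "(INF y\<in>S. c y) \<le> (SUP y\<in>S. c y)"
    using cINF_lower[OF below] cSUP_upper[OF _ above] order_trans by blast
  ultimately show ?thesis using below \<open>0 < m\<close> by linarith
qed

locale SOS_Rp_deriv_bounded =
  fixes \<alpha> :: "real \<Rightarrow> real" and K :: real
  assumes SOS: "SOS_Rp \<alpha>" and K_ge_1: "1 \<le> K"
    and deriv_bounds: "\<And>x. 0 < x \<Longrightarrow> 1/K \<le> deriv \<alpha> x \<and> deriv \<alpha> x \<le> K"
begin

lemmas SOS_D = SOS_Rp_D[OF SOS]

lemma pos: "0 < x \<Longrightarrow> 0 < \<alpha> x"
  using bij_betwE[OF SOS_D(1)] by auto

lemma less_mono: "0 < y \<Longrightarrow> y < x \<Longrightarrow> \<alpha> y < \<alpha> x"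
  using strict_mono_onD[OF SOS_D(2)] by simp

lemma diff_bounds:
  assumes "0 < y" "y < x"
  shows "(x - y)/K \<le> \<alpha> x - \<alpha> y \<and> \<alpha> x - \<alpha> y \<le> K * (x - y)"
proof -
  obtain z where z: "y < z" "z < x" "\<alpha> x - \<alpha> y = (x - y) * deriv \<alpha> z"
    using MVT2[of y x \<alpha> "deriv \<alpha>"] SOS_D(3) assms by auto
  moreover have "(x - y) * (1/K) \<le> (x - y) * deriv \<alpha> z" "(x - y) * deriv \<alpha> z \<le> (x - y) * K"
    using deriv_bounds[of z] z assms by (intro mult_left_mono; simp)+
  ultimately show ?thesis by (simp add: mult.commute)
qed

lemma tendsto_at_right_0: "(\<alpha> \<longlongrightarrow> 0) (at_right 0)"
proof (rule order_tendstoI)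
  show "\<forall>\<^sub>F y in at_right 0. e < \<alpha> y" if "e < 0" for e :: real
    using eventually_at_right_less[of 0] by eventually_elim (use that pos in force)
  show "\<forall>\<^sub>F y in at_right 0. \<alpha> y < e" if "0 < e" for e :: real
  proof -
    define y0 where "y0 = inv_into Rp \<alpha> e"
    have "0 < y0" "\<alpha> y0 = e"
      using that bij_betwE[OF bij_betw_inv_into[OF SOS_D(1)]] bij_betw_inv_into_right[OF SOS_D(1)]
      unfolding y0_def by auto
    then show ?thesis
      using less_mono unfolding eventually_at_right_field by (metis)
  qed
qed

lemma linear_bounds:
  assumes "0 < x"
  shows "x/K \<le> \<alpha> x \<and> \<alpha> x \<le> K * x"
proof
  have ev: "\<forall>\<^sub>F y in at_right 0. 0 < y \<and> y < x"
    using assms by (auto simp: eventually_at_right_field intro: exI[of _ x])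
  show "x/K \<le> \<alpha> x"
  proof (rule tendsto_le[OF _ tendsto_const])
    have "((\<lambda>y. (x - y)/K + \<alpha> y) \<longlongrightarrow> (x - 0)/K + 0) (at_right 0)"
      by (intro tendsto_intros tendsto_at_right_0) (use K_ge_1 in auto)
    then show "((\<lambda>y. (x - y)/K + \<alpha> y) \<longlongrightarrow> x/K) (at_right 0)" by simp
    show "\<forall>\<^sub>F y in at_right 0. (x - y)/K + \<alpha> y \<le> \<alpha> x"
      using ev by eventually_elim (use diff_bounds in fastforce)
  qed simp
  show "\<alpha> x \<le> K * x"
  proof (rule tendsto_le[OF _ _ tendsto_const])
    have "((\<lambda>y. K * (x - y) + \<alpha> y) \<longlongrightarrow> K * (x - 0) + 0) (at_right 0)"
      by (intro tendsto_intros tendsto_at_right_0)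
    then show "((\<lambda>y. K * (x - y) + \<alpha> y) \<longlongrightarrow> K * x) (at_right 0)" by simp
    show "\<forall>\<^sub>F y in at_right 0. \<alpha> x \<le> K * (x - y) + \<alpha> y"
      using ev by eventually_elim (use diff_bounds in fastforce)
  qed simp
qed

lemma ratio_bounds: "0 < t \<Longrightarrow> \<alpha> t / t \<in> {1/K..K}"
  using linear_bounds[of t] by (auto simp: field_simps)

lemma shifted_ratio_pos: "0 < t \<Longrightarrow> 0 < shifted_ratio \<alpha> t"
  using pos[of t] by (simp add: shifted_ratio_def)

lemma shifted_ratio_bounds: "0 < t \<Longrightarrow> shifted_ratio \<alpha> t \<in> {1/K..K}"
  using linear_bounds[of t] pos[of t] K_ge_1
  by (auto simp: shifted_ratio_def field_simps)

lemma deriv_pos: "0 < x \<Longrightarrow> 0 < deriv \<alpha> x"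
  using deriv_bounds[of x] K_ge_1 by (smt (verit) divide_pos_pos)

lemma continuous_on_Rp: "continuous_on Rp \<alpha>"
  using SOS_D(3) by (auto intro!: continuous_at_imp_continuous_on DERIV_isCont)

lemma ratio_minus_deriv_tendsto_0: "((\<lambda>t. \<alpha> t / t - deriv \<alpha> t) \<longlongrightarrow> 0) at_top"
proof (rule tendstoI)
  fix e :: real assume "e > 0"
  define \<delta> where "\<delta> = min (1/2) (e / (4*K))"
  have \<delta>: "0 < \<delta>" "\<delta> < 1" "K * \<delta> \<le> e/4"
    using \<open>e > 0\<close> K_ge_1 by (auto simp: \<delta>_def min_def field_simps)
  have "osc_vanishes (\<lambda>x. complex_of_real (deriv \<alpha> x)) \<delta> at_top"
    using SOS_D(7) \<delta> unfolding SO_Rp_iff by auto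
  moreover have "e/4 > 0" using \<open>e > 0\<close> by simp
  ultimately obtain N where N: "\<And>s. N \<le> s \<Longrightarrow>
      \<forall>t\<in>{\<delta> * s..s}. \<forall>\<tau>\<in>{\<delta> * s..s}. \<bar>deriv \<alpha> t - deriv \<alpha> \<tau>\<bar> \<le> e/4"
    unfolding osc_vanishes_def eventually_at_top_linorder norm_complex_of_real_diff by blast
  have "\<bar>\<alpha> t / t - deriv \<alpha> t\<bar> < e" if t: "max N 1 \<le> t" for t
  proof -
    have "0 < \<delta> * t" "\<delta> * t < t" using \<delta> t by auto
    then obtain \<xi> where \<xi>: "\<delta> * t < \<xi>" "\<xi> < t" "\<alpha> t - \<alpha> (\<delta> * t) = (t - \<delta> * t) * deriv \<alpha> \<xi>"
      using MVT2[of "\<delta> * t" t \<alpha> "deriv \<alpha>"] SOS_D(3) by auto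
    with t have "\<alpha> t / t - deriv \<alpha> t = \<alpha> (\<delta> * t) / t - \<delta> * deriv \<alpha> \<xi> + (deriv \<alpha> \<xi> - deriv \<alpha> t)"
      by (simp add: field_simps)
    moreover have "0 \<le> \<alpha> (\<delta> * t) / t" "\<alpha> (\<delta> * t) / t \<le> K * \<delta>"
      using pos[of "\<delta> * t"] linear_bounds[of "\<delta> * t"] \<open>0 < \<delta> * t\<close> t
      by (auto simp: divide_le_eq mult.assoc)
    moreover have "0 \<le> \<delta> * deriv \<alpha> \<xi>" "\<delta> * deriv \<alpha> \<xi> \<le> K * \<delta>"
    proof -
      have "1/K \<le> deriv \<alpha> \<xi>" "deriv \<alpha> \<xi> \<le> K" "0 < 1/K"
        using deriv_bounds[of \<xi>] \<xi> \<open>0 < \<delta> * t\<close> K_ge_1 by auto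
      then have "0 \<le> deriv \<alpha> \<xi>" "deriv \<alpha> \<xi> \<le> K" by linarith+
      then show "0 \<le> \<delta> * deriv \<alpha> \<xi>" "\<delta> * deriv \<alpha> \<xi> \<le> K * \<delta>"
        using \<delta> by (simp_all add: mult.commute[of \<delta>] mult_right_mono)
    qed
    moreover have "\<bar>deriv \<alpha> \<xi> - deriv \<alpha> t\<bar> \<le> e/4"
    proof -
      have "N \<le> t" "\<xi> \<in> {\<delta> * t..t}" "t \<in> {\<delta> * t..t}" using t \<xi> \<open>\<delta> * t < t\<close> by auto
      then show ?thesis using N by blast
    qed
    ultimately show ?thesis using \<delta>(3) \<open>e > 0\<close> by linarith
  qed
  then show "\<forall>\<^sub>F t in at_top. dist (\<alpha> t / t - deriv \<alpha> t) 0 < e"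
    unfolding eventually_at_top_linorder dist_real_def by (intro exI[of _ "max N 1"]) simp
qed

lemma shifted_ratio_tendsto_1: "(shifted_ratio \<alpha> \<longlongrightarrow> 1) (at_right 0)"
proof -
  have "((\<lambda>t. (1 + t) / (1 + \<alpha> t)) \<longlongrightarrow> (1 + 0) / (1 + 0)) (at_right 0)"
    by (intro tendsto_intros tendsto_at_right_0) auto
  then show ?thesis by (simp add: shifted_ratio_def[abs_def])
qed

lemma shifted_ratio_asymp_at_top:
  "((\<lambda>t. shifted_ratio \<alpha> t - 1 / (\<alpha> t / t)) \<longlongrightarrow> 0) at_top"
proof (rule Lim_null_comparison)
  show "((\<lambda>t. (1 + K) * K / t) \<longlongrightarrow> 0) at_top"
    by (intro tendsto_divide_0[OF tendsto_const] filterlim_at_top_imp_at_infinity filterlim_ident)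
  have bound: "norm (shifted_ratio \<alpha> t - 1 / (\<alpha> t / t)) \<le> (1 + K) * K / t" if "0 < t" for t
  proof -
    have "0 < \<alpha> t" "t/K \<le> \<alpha> t" using pos[OF that] linear_bounds[OF that] by auto
    then have "t \<le> K * \<alpha> t" using K_ge_1 by (simp add: divide_le_eq mult.commute)
    have "norm (shifted_ratio \<alpha> t - 1 / (\<alpha> t / t)) = \<bar>\<alpha> t - t\<bar> / ((1 + \<alpha> t) * \<alpha> t)"
      using \<open>0 < \<alpha> t\<close> that by (simp add: shifted_ratio_def field_simps abs_divide)
    also have "\<dots> \<le> (1 + K) * \<alpha> t / ((1 + \<alpha> t) * \<alpha> t)"
    proof (rule divide_right_mono)
      show "\<bar>\<alpha> t - t\<bar> \<le> (1 + K) * \<alpha> t"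
        using \<open>t \<le> K * \<alpha> t\<close> \<open>0 < \<alpha> t\<close> that by (auto simp: abs_le_iff distrib_right)
    qed (use \<open>0 < \<alpha> t\<close> in simp)
    also have "\<dots> \<le> (1 + K) / \<alpha> t"
      using \<open>0 < \<alpha> t\<close> K_ge_1 by (simp add: divide_left_mono)
    also have "\<dots> \<le> (1 + K) / (t/K)"
      using \<open>t/K \<le> \<alpha> t\<close> \<open>0 < \<alpha> t\<close> that K_ge_1 by (intro divide_left_mono) auto
    finally show ?thesis by simp
  qed
  show "\<forall>\<^sub>F t in at_top. norm (shifted_ratio \<alpha> t - 1 / (\<alpha> t / t)) \<le> (1 + K) * K / t"
    using eventually_gt_at_top[of 0] by eventually_elim (rule bound)
qed

lemma osc_vanishes_shifted_ratio_at_top: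
  assumes l: "l \<in> {0<..<1}"
  shows "osc_vanishes (\<lambda>t. complex_of_real (shifted_ratio \<alpha> t)) l at_top"
proof -
  have "0 < l" using l by simp
  have "osc_vanishes (\<lambda>x. complex_of_real (deriv \<alpha> x)) l at_top"
    using SOS_D(7) l unfolding SO_Rp_iff by blast
  moreover have "((\<lambda>t. complex_of_real (\<alpha> t / t - deriv \<alpha> t)) \<longlongrightarrow> complex_of_real 0) at_top"
    by (rule tendsto_of_real[OF ratio_minus_deriv_tendsto_0])
  then have "((\<lambda>t. complex_of_real (\<alpha> t / t) - complex_of_real (deriv \<alpha> t)) \<longlongrightarrow> 0) at_top"
    by simp
  ultimately have ratio: "osc_vanishes (\<lambda>t. complex_of_real (\<alpha> t / t)) l at_top"
    by (rule osc_vanishes_tendsto_at_top[OF _ \<open>0 < l\<close>])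
  have inverse: "continuous_on {1/K..K} (\<lambda>v. 1 / v)"
    using K_ge_1 by (intro continuous_intros) auto
  have "\<alpha> t / t \<in> {1/K..K}" if "{l*r..r} \<subseteq> Rp" "t \<in> {l*r..r}" for r t
  proof -
    have "0 < t" using that by auto
    then show ?thesis by (rule ratio_bounds)
  qed
  then have "\<forall>\<^sub>F r in at_top. \<forall>t\<in>{l*r..r}. \<alpha> t / t \<in> {1/K..K}"
    using eventually_interval_in_Rp_at_top[OF l] by (auto elim: eventually_mono)
  from osc_vanishes_compose[OF ratio inverse compact_Icc this]
  have "osc_vanishes (\<lambda>t. complex_of_real (1 / (\<alpha> t / t))) l at_top" .
  moreover have "((\<lambda>t. complex_of_real (shifted_ratio \<alpha> t - 1 / (\<alpha> t / t))) \<longlongrightarrow> complex_of_real 0) at_top"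
    by (rule tendsto_of_real[OF shifted_ratio_asymp_at_top])
  then have "((\<lambda>t. complex_of_real (shifted_ratio \<alpha> t) - complex_of_real (1 / (\<alpha> t / t))) \<longlongrightarrow> 0) at_top"
    by simp
  ultimately show ?thesis
    by (rule osc_vanishes_tendsto_at_top[OF _ \<open>0 < l\<close>])
qed

lemma SO_Rp_shifted_ratio: "SO_Rp (\<lambda>t. complex_of_real (shifted_ratio \<alpha> t))"
  unfolding SO_Rp_iff
proof (intro conjI ballI)
  have "continuous_on Rp (shifted_ratio \<alpha>)"
    unfolding shifted_ratio_def[abs_def] using continuous_on_Rp pos
    by (intro continuous_intros) (auto simp: add_pos_pos less_imp_neq[symmetric])
  moreover have "norm (complex_of_real (shifted_ratio \<alpha> t)) \<le> K" if "0 < t" for t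
    using shifted_ratio_bounds[OF that] shifted_ratio_pos[OF that] by auto
  then have "bounded ((\<lambda>t. complex_of_real (shifted_ratio \<alpha> t)) ` Rp)"
    unfolding bounded_iff using Rp_iff by blast
  ultimately show "Cb Rp (\<lambda>t. complex_of_real (shifted_ratio \<alpha> t))"
    unfolding Cb_def continuous_on_of_real_o_iff by simp
  fix l :: real assume l: "l \<in> {0<..<1}"
  then have "0 < l" by simp
  have "((\<lambda>t. complex_of_real (shifted_ratio \<alpha> t)) \<longlongrightarrow> complex_of_real 1) (at_right 0)"
    by (rule tendsto_of_real[OF shifted_ratio_tendsto_1])
  then have "((\<lambda>t. complex_of_real (shifted_ratio \<alpha> t) - complex_of_real 1) \<longlongrightarrow> 0) (at_right 0)"
    by (rule LIM_zero)
  then show "osc_vanishes (\<lambda>t. complex_of_real (shifted_ratio \<alpha> t)) l (at_right 0)"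
    by (rule osc_vanishes_tendsto_at_right[OF osc_vanishes_const \<open>0 < l\<close>])
  show "osc_vanishes (\<lambda>t. complex_of_real (shifted_ratio \<alpha> t)) l at_top"
    using l by (rule osc_vanishes_shifted_ratio_at_top)
qed

lemma SO_Rp_shifted_ratio_powr: "SO_Rp (\<lambda>t. complex_of_real (shifted_ratio \<alpha> t powr a))"
proof (rule SO_Rp_compose[OF SO_Rp_shifted_ratio _ shifted_ratio_bounds])
  show "continuous_on {1/K..K} (\<lambda>v. v powr a)"
    using K_ge_1 by (intro continuous_intros) auto
qed

lemma SO_Rp_conj_deriv:
  "SO_Rp (\<lambda>t. complex_of_real (deriv \<alpha> t * shifted_ratio \<alpha> t ^ 2))"
proof -
  have "SO_Rp (\<lambda>t. complex_of_real (deriv \<alpha> t) * complex_of_real (shifted_ratio \<alpha> t ^ 2))"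
  proof (rule SO_Rp_mult[OF SOS_D(7) SO_Rp_compose[OF SO_Rp_shifted_ratio _ shifted_ratio_bounds]])
    show "continuous_on {1/K..K} (\<lambda>v. v ^ 2)" by (intro continuous_intros)
    show "0 < K^2" using K_ge_1 by simp
    fix t :: real assume "0 < t"
    then have "0 < deriv \<alpha> t" "deriv \<alpha> t \<le> K" "0 < shifted_ratio \<alpha> t" "shifted_ratio \<alpha> t \<le> K"
      using deriv_pos deriv_bounds shifted_ratio_pos shifted_ratio_bounds by auto
    moreover have "K \<le> K^2" using K_ge_1 by (simp add: power2_eq_square)
    ultimately have "\<bar>deriv \<alpha> t\<bar> \<le> K^2" "\<bar>shifted_ratio \<alpha> t ^ 2\<bar> \<le> K^2"
      by (auto intro!: power_mono)
    then show "norm (complex_of_real (deriv \<alpha> t)) \<le> K^2 \<and>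
        norm (complex_of_real (shifted_ratio \<alpha> t ^ 2)) \<le> K^2"
      unfolding norm_of_real by blast
  qed
  then show ?thesis by simp
qed

lemma deriv_eta_conj:
  "y \<in> II \<Longrightarrow> deriv (eta_inv \<circ> \<alpha> \<circ> eta) y = deriv \<alpha> (eta y) * shifted_ratio \<alpha> (eta y) ^ 2"
  using eta_conj_C1(2)[of \<alpha> "eta_inv \<circ> \<alpha> \<circ> eta" y] SOS_D(3) SOS_D(4) pos
  by (auto simp: shifted_ratio_def real_differentiable_def)

lemma deriv_eta_conj_bounds:
  assumes "y \<in> II"
  shows "1/K^3 \<le> deriv (eta_inv \<circ> \<alpha> \<circ> eta) y \<and> deriv (eta_inv \<circ> \<alpha> \<circ> eta) y \<le> K^3"
proof -
  have "0 < eta y" using assms eta_pos by simp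
  then have "1/K \<le> deriv \<alpha> (eta y)" "deriv \<alpha> (eta y) \<le> K" "0 < 1/K"
    "1/K \<le> shifted_ratio \<alpha> (eta y)" "shifted_ratio \<alpha> (eta y) \<le> K"
    "0 < deriv \<alpha> (eta y)" "0 < shifted_ratio \<alpha> (eta y)"
    using deriv_bounds shifted_ratio_bounds deriv_pos shifted_ratio_pos K_ge_1 by auto
  then have "1/K * (1/K)^2 \<le> deriv \<alpha> (eta y) * shifted_ratio \<alpha> (eta y) ^ 2"
    "deriv \<alpha> (eta y) * shifted_ratio \<alpha> (eta y) ^ 2 \<le> K * K^2"
    by (intro mult_mono power_mono; simp)+
  then show ?thesis
    using deriv_eta_conj[OF assms] by (simp add: power3_eq_cube power2_eq_square)
qed

lemma SOS_I_eta_conj: "SOS_I (eta_inv \<circ> \<alpha> \<circ> eta)"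
proof -
  define \<alpha>t where "\<alpha>t = eta_inv \<circ> \<alpha> \<circ> eta"
  have diffeo: "op_diffeo_on II \<alpha>t"
    using op_diffeo_on_eta_conj SOS unfolding SOS_Rp_def \<alpha>t_def by blast
  have "\<alpha>t x \<noteq> x" if "x \<in> II" for x
  proof
    assume "\<alpha>t x = x"
    then have "eta (\<alpha>t x) = eta x" by simp
    moreover have "eta (\<alpha>t x) = \<alpha> (eta x)"
      using that eta_pos pos eta_eta_inv by (simp add: \<alpha>t_def)
    ultimately show False using SOS_D(5) eta_pos that by simp
  qed
  moreover have "Cb II (\<lambda>x. complex_of_real (ln (deriv \<alpha>t x)))"
    unfolding Cb_def continuous_on_of_real_o_iff
  proof
    have "0 < 1/K^3" using K_ge_1 by simp
    then have bounds: "0 < deriv \<alpha>t x" "1/K^3 \<le> deriv \<alpha>t x" "deriv \<alpha>t x \<le> K^3"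
      if "x \<in> II" for x
      using deriv_eta_conj_bounds[OF that] unfolding \<alpha>t_def by linarith+
    then have "\<forall>x\<in>II. deriv \<alpha>t x \<noteq> 0" by fastforce
    then show "continuous_on II (\<lambda>x. ln (deriv \<alpha>t x))"
      using diffeo unfolding op_diffeo_on_def by (intro continuous_intros) auto
    have "\<bar>ln (deriv \<alpha>t x)\<bar> \<le> ln (K^3)" if "x \<in> II" for x
    proof -
      have "ln (1/K^3) \<le> ln (deriv \<alpha>t x)" "ln (deriv \<alpha>t x) \<le> ln (K^3)"
        using bounds(1)[OF that] bounds(2)[OF that] bounds(3)[OF that] \<open>0 < 1/K^3\<close>
        by (simp_all only: ln_le_cancel_iff zero_less_power)
      then show ?thesis using K_ge_1 by (simp add: ln_div)
    qed
    then show "bounded ((\<lambda>x. complex_of_real (ln (deriv \<alpha>t x))) ` II)"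
      unfolding bounded_iff by (auto intro!: exI[of _ "ln (K^3)"])
  qed
  moreover have "SO_I (\<lambda>x. complex_of_real (deriv \<alpha>t x))"
    by (rule SO_I_cong[OF SO_I_comp_eta[OF SO_Rp_conj_deriv]]) (simp add: deriv_eta_conj \<alpha>t_def)
  ultimately show ?thesis
    using diffeo unfolding SOS_I_def \<alpha>t_def by blast
qed

lemma SO_I_eta_conj_ratio_powr:
  fixes a :: real
  defines "c \<equiv> \<lambda>y. ((1 - (eta_inv \<circ> \<alpha> \<circ> eta) y) / (1 - y)) powr a"
  assumes "0 \<le> a"
  shows "SO_I (\<lambda>y. complex_of_real (c y)) \<and> bdd_below (c ` II) \<and> bdd_above (c ` II) \<and>
    0 < (INF y\<in>II. c y) \<and> (INF y\<in>II. c y) \<le> (SUP y\<in>II. c y)"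
proof -
  have c_eq: "c y = shifted_ratio \<alpha> (eta y) powr a" if "y \<in> II" for y
    using that one_minus_eta_conj_div[of y \<alpha>] pos[of "eta y"] eta_pos by (simp add: c_def)
  have SO: "SO_I (\<lambda>y. complex_of_real (c y))"
    by (rule SO_I_cong[OF SO_I_comp_eta[OF SO_Rp_shifted_ratio_powr]]) (simp add: c_eq)
  have bounds: "(1/K) powr a \<le> c y \<and> c y \<le> K powr a" if "y \<in> II" for y
    using shifted_ratio_bounds[of "eta y"] shifted_ratio_pos[of "eta y"] eta_pos[of y] that
      K_ge_1 \<open>0 \<le> a\<close>
    by (auto simp: c_eq intro!: powr_mono2)
  have "II \<noteq> {}" "0 < (1/K) powr a" using K_ge_1 by (auto simp: II_def)
  from INF_SUP_of_bounded_below_by_pos[OF this bounds] SO show ?thesis by simp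
qed

end

theorem lemma3p3:
  fixes p :: real
  assumes "1 < p"
  shows "(\<forall>a. SO_Rp a \<longrightarrow> SO_I (a \<circ> eta)) \<and>
         (\<forall>\<alpha>. SOS_Rp \<alpha> \<longrightarrow>
            (let \<alpha>t = eta_inv \<circ> \<alpha> \<circ> eta;
                 c = (\<lambda>y. ((1 - \<alpha>t y) / (1 - y)) powr (2 / p))
             in SOS_I \<alpha>t \<and> SO_I (\<lambda>y. complex_of_real (c y)) \<and>
                bdd_below (c ` II) \<and> bdd_above (c ` II) \<and>
                0 < (INF y\<in>II. c y) \<and> (INF y\<in>II. c y) \<le> (SUP y\<in>II. c y)))"
proof (intro conjI allI impI)
  show "SO_I (a \<circ> eta)" if "SO_Rp a" for a
    using that by (rule SO_I_comp_eta)
  fix \<alpha> assume "SOS_Rp \<alpha>"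
  then obtain K where "SOS_Rp_deriv_bounded \<alpha> K"
    using SOS_Rp_deriv_bounds unfolding SOS_Rp_deriv_bounded_def by metis
  then interpret SOS_Rp_deriv_bounded \<alpha> K .
  have "0 \<le> 2/p" using assms by simp
  then show "let \<alpha>t = eta_inv \<circ> \<alpha> \<circ> eta; c = (\<lambda>y. ((1 - \<alpha>t y) / (1 - y)) powr (2 / p))
      in SOS_I \<alpha>t \<and> SO_I (\<lambda>y. complex_of_real (c y)) \<and>
         bdd_below (c ` II) \<and> bdd_above (c ` II) \<and>
         0 < (INF y\<in>II. c y) \<and> (INF y\<in>II. c y) \<le> (SUP y\<in>II. c y)"
    unfolding Let_def by (rule conjI[OF SOS_I_eta_conj SO_I_eta_conj_ratio_powr])
qed

end
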